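(* Let $\Sigma=(\mathbb{N}_0,X,U,\mathscr{U},\phi)$ be a control system as in the standing setup (in particular $\mathscr U$ is a compact metrizable space and $\phi$ is continuous), and let $Q\subset X$ be a compact control set with nonempty interior. Then the following are equivalent: (1) $Q$ is equi-invariant in the mean; (2) $Q$ is finitely equi-invariant in the mean; (3) $Q$ has bounded invariance complexity in the mean.
   Context: Standing setup: $(X,d)$ is a metric space, $U$ is a compact metric space, and $F:X\times U\to X$ is a map such that $F_u:=F(\cdot,u)$ is continuous for every $u\in U$. Let $\mathscr U=U^{\mathbb N_0}$ with the product topology. For $\omega=(\omega_0,\omega_1,\dots)\in\mathscr U$, $x\in X$, set $\phi(0,x,\omega)=x$ and $\phi(k,x,\omega)=F_{\omega_{k-1}}\circ\cdots\circ F_{\omega_0}(x)$ for $k\ge1$. It is assumed that $\phi:\mathbb N_0\times X\times\mathscr U\to X$ is continuous. Notation: $\mathbb N=\{1,2,\dots\}$; $B(x,\delta)$ is the open ball; $d(y,Q)=\inf_{q\in Q}d(y,q)$. Control set: $D\subset X$ is a control set if (i) for every $x\in D$ there is $\omega\in\mathscr U$ with $\phi(k,x,\omega)\in D$ for all $k\in\mathbb N_0$; (ii) for every $x\in D$, $D\subset\operatorname{cl}\mathcal O^+(x)$, where $\mathcal O^+(x)=\{\phi(m,x,\omega):m\in\mathbb N_0,\omega\in\mathscr U\}$; (iii) $D$ is maximal with (i) and (ii). Equi-invariance in the mean: $x\in Q$ is a finitely equi-invariant point in the mean of $Q$ if for every $\varepsilon>0$ there exist $\delta>0$ and a finite set $F\subset\mathscr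 U$ such that for every $y\in B(x,\delta)\cap Q$ there is $\omega\in F$ with $\frac1n\sum_{i=0}^{n-1}d(\phi(i,y,\omega),Q)<\varepsilon$ for all $n\in\mathbb N$; it is an equi-invariant point in the mean if this holds with $F$ a singleton. $Q$ is (finitely) equi-invariant in the mean if every point of $Q$ is such a point. Invariance complexity in the mean: $\hat Q^\varepsilon_{n,\omega}=\{x\in Q:\max_{1\le k\le n}\frac1k\sum_{i=0}^{k-1}d(\phi(i,x,\omega),Q)<\varepsilon\}$; $F\subset\mathscr U$ is $(n,\varepsilon,Q)$-spanning in the mean if $Q=\bigcup_{\omega\in F}\hat Q^\varepsilon_{n,\omega}$; $\hat r_{inv}(n,\varepsilon,Q)$ is the minimal cardinality of such $F$; $Q$ has bounded invariance complexity in the mean if for every $\varepsilon>0$ there is $C$ with $\hat r_{inv}(n,\varepsilon,Q)\le C$ for all $n\in\mathbb N$. *)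

theory Defs
  imports "HOL-Analysis.Analysis" "HOL-Library.Extended_Nat"
begin

text \<open>Control system: state space the metric type 'x, control range U :: 'u set (compact),
  admissible control sequences = sequences nat \<Rightarrow> 'u with values in U (product topology on nat \<Rightarrow> 'u).\<close>

definition controls :: "'u set \<Rightarrow> (nat \<Rightarrow> 'u) set" where
  "controls U = {\<omega>. \<forall>i. \<omega> i \<in> U}"

fun phi :: "('x \<Rightarrow> 'u \<Rightarrow> 'x) \<Rightarrow> nat \<Rightarrow> 'x \<Rightarrow> (nat \<Rightarrow> 'u) \<Rightarrow> 'x" where
  "phi F 0 x \<omega> = x"
| "phi F (Suc k) x \<omega> = F (phi F k x \<omega>) (\<omega> k)"

definition orbit_plus :: "('x \<Rightarrow> 'u \<Rightarrow> 'x) \<Rightarrow> 'u set \<Rightarrow> 'x \<Rightarrow> 'x set" where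
  "orbit_plus F U x = {phi F m x \<omega> | m \<omega>. \<omega> \<in> controls U}"

definition cs_props :: "('x::topological_space \<Rightarrow> 'u \<Rightarrow> 'x) \<Rightarrow> 'u set \<Rightarrow> 'x set \<Rightarrow> bool" where
  "cs_props F U D \<longleftrightarrow>
     (\<forall>x\<in>D. \<exists>\<omega>\<in>controls U. \<forall>k. phi F k x \<omega> \<in> D) \<and>
     (\<forall>x\<in>D. D \<subseteq> closure (orbit_plus F U x))"

definition control_set :: "('x::topological_space \<Rightarrow> 'u \<Rightarrow> 'x) \<Rightarrow> 'u set \<Rightarrow> 'x set \<Rightarrow> bool" where
  "control_set F U D \<longleftrightarrow> cs_props F U D \<and> (\<forall>D'. D \<subseteq> D' \<and> cs_props F U D' \<longrightarrow> D' = D)"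

definition avg_dist :: "('x::metric_space \<Rightarrow> 'u \<Rightarrow> 'x) \<Rightarrow> 'x set \<Rightarrow> nat \<Rightarrow> 'x \<Rightarrow> (nat \<Rightarrow> 'u) \<Rightarrow> real" where
  "avg_dist F Q n y \<omega> = (\<Sum>i<n. infdist (phi F i y \<omega>) Q) / real n"

definition fin_equi_inv_mean_point ::
  "('x::metric_space \<Rightarrow> 'u \<Rightarrow> 'x) \<Rightarrow> 'u set \<Rightarrow> 'x set \<Rightarrow> 'x \<Rightarrow> bool" where
  "fin_equi_inv_mean_point F U Q x \<longleftrightarrow> x \<in> Q \<and>
     (\<forall>\<epsilon>>0. \<exists>\<delta>>0. \<exists>Fs. finite Fs \<and> Fs \<subseteq> controls U \<and>
        (\<forall>y\<in>ball x \<delta> \<inter> Q. \<exists>\<omega>\<in>Fs. \<forall>n\<ge>1. avg_dist F Q n y \<omega> < \<epsilon>))"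

definition equi_inv_mean_point ::
  "('x::metric_space \<Rightarrow> 'u \<Rightarrow> 'x) \<Rightarrow> 'u set \<Rightarrow> 'x set \<Rightarrow> 'x \<Rightarrow> bool" where
  "equi_inv_mean_point F U Q x \<longleftrightarrow> x \<in> Q \<and>
     (\<forall>\<epsilon>>0. \<exists>\<delta>>0. \<exists>\<omega>\<in>controls U.
        (\<forall>y\<in>ball x \<delta> \<inter> Q. \<forall>n\<ge>1. avg_dist F Q n y \<omega> < \<epsilon>))"

definition fin_equi_inv_mean :: "('x::metric_space \<Rightarrow> 'u \<Rightarrow> 'x) \<Rightarrow> 'u set \<Rightarrow> 'x set \<Rightarrow> bool" where
  "fin_equi_inv_mean F U Q \<longleftrightarrow> (\<forall>x\<in>Q. fin_equi_inv_mean_point F U Q x)"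

definition equi_inv_mean :: "('x::metric_space \<Rightarrow> 'u \<Rightarrow> 'x) \<Rightarrow> 'u set \<Rightarrow> 'x set \<Rightarrow> bool" where
  "equi_inv_mean F U Q \<longleftrightarrow> (\<forall>x\<in>Q. equi_inv_mean_point F U Q x)"

definition hatQ :: "('x::metric_space \<Rightarrow> 'u \<Rightarrow> 'x) \<Rightarrow> 'x set \<Rightarrow> nat \<Rightarrow> real \<Rightarrow> (nat \<Rightarrow> 'u) \<Rightarrow> 'x set" where
  "hatQ F Q n \<epsilon> \<omega> = {x\<in>Q. Max ((\<lambda>k. avg_dist F Q k x \<omega>) ` {1..n}) < \<epsilon>}"

definition spanning_mean ::
  "('x::metric_space \<Rightarrow> 'u \<Rightarrow> 'x) \<Rightarrow> 'u set \<Rightarrow> nat \<Rightarrow> real \<Rightarrow> 'x set \<Rightarrow> (nat \<Rightarrow> 'u) set \<Rightarrow> bool" where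
  "spanning_mean F U n \<epsilon> Q Fs \<longleftrightarrow> Fs \<subseteq> controls U \<and> Q = (\<Union>\<omega>\<in>Fs. hatQ F Q n \<epsilon> \<omega>)"

text \<open>Minimal cardinality (infinite sets count as infinity; Inf of the empty set is infinity).\<close>
definition r_inv_mean ::
  "('x::metric_space \<Rightarrow> 'u \<Rightarrow> 'x) \<Rightarrow> 'u set \<Rightarrow> nat \<Rightarrow> real \<Rightarrow> 'x set \<Rightarrow> enat" where
  "r_inv_mean F U n \<epsilon> Q =
     (INF Fs \<in> {Fs. spanning_mean F U n \<epsilon> Q Fs}. (if finite Fs then enat (card Fs) else \<infinity>))"

definition bounded_inv_complexity_mean ::
  "('x::metric_space \<Rightarrow> 'u \<Rightarrow> 'x) \<Rightarrow> 'u set \<Rightarrow> 'x set \<Rightarrow> bool" where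
  "bounded_inv_complexity_mean F U Q \<longleftrightarrow>
     (\<forall>\<epsilon>>0. \<exists>C::nat. \<forall>n\<ge>1. r_inv_mean F U n \<epsilon> Q \<le> enat C)"

end

theory Submission
  imports Defs
begin

text \<open>All three properties are equivalent to a global one: for every \<open>\<epsilon> > 0\<close> there is a finite
  set of controls such that every point of \<open>Q\<close> is kept \<open>\<epsilon>\<close>-close to \<open>Q\<close> in the mean, at every
  time horizon, by one of them. Finite equi-invariance gives such a family by covering the compact set
  \<open>Q\<close> with finitely many balls. Bounded complexity gives it by Tychonoff: the \<open>C\<close>-tuples of
  controls that are spanning up to time \<open>n\<close> form a decreasing sequence of nonempty closed subsets of
  the compact space of tuples, and a tuple in the intersection works for all horizons at once.
  Conversely such families immediately give finite equi-invariance and bounded complexity.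

  For equi-invariance with a single control, the closed sets of points served by the controls of a
  family cover the interior of \<open>Q\<close>, so one of them contains a ball \<open>B\<close>. Every \<open>x \<in> Q\<close> can be
  steered close to the centre of \<open>B\<close>; the whole steering segment stays in \<open>Q\<close> by maximality of the
  control set, and by continuity the steering control followed by the control serving \<open>B\<close> works
  for all points near \<open>x\<close>.\<close>

section \<open>Trajectories under switched controls\<close>

lemma phi_cong: "(\<And>j. j < i \<Longrightarrow> \<omega> j = \<omega>' j) \<Longrightarrow> phi F i x \<omega> = phi F i x \<omega>'"
  by (induction i) auto

lemma phi_add: "phi F (m + k) x \<omega> = phi F k (phi F m x \<omega>) (\<lambda>i. \<omega> (m + i))"
  by (induction k) auto

lemma shift_controls: "\<omega> \<in> controls U \<Longrightarrow> (\<lambda>i. \<omega> (m + i)) \<in> controls U"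
  by (simp add: controls_def)

definition switch_at :: "nat \<Rightarrow> (nat \<Rightarrow> 'u) \<Rightarrow> (nat \<Rightarrow> 'u) \<Rightarrow> nat \<Rightarrow> 'u" where
  "switch_at T \<nu> \<mu> i = (if i < T then \<nu> i else \<mu> (i - T))"

lemma switch_at_controls: "\<nu> \<in> controls U \<Longrightarrow> \<mu> \<in> controls U \<Longrightarrow> switch_at T \<nu> \<mu> \<in> controls U"
  by (simp add: controls_def switch_at_def)

lemma phi_switch_at_le: "i \<le> T \<Longrightarrow> phi F i x (switch_at T \<nu> \<mu>) = phi F i x \<nu>"
  by (rule phi_cong) (simp add: switch_at_def)

lemma phi_switch_at_add: "phi F (T + k) x (switch_at T \<nu> \<mu>) = phi F k (phi F T x \<nu>) \<mu>"
proof -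
  have "(\<lambda>i. switch_at T \<nu> \<mu> (T + i)) = \<mu>" by (simp add: switch_at_def)
  then show ?thesis
    using phi_add[of F T k x "switch_at T \<nu> \<mu>"] phi_switch_at_le[of T T F x \<nu> \<mu>] by simp
qed

lemma continuous_on_phi_state:
  assumes "continuous_on (UNIV \<times> controls U) (\<lambda>(x, \<omega>). phi F k x \<omega>)" "\<omega> \<in> controls U"
  shows "continuous_on UNIV (\<lambda>x. phi F k x \<omega>)"
proof -
  have "continuous_on UNIV (\<lambda>x. (x, \<omega>))" by (intro continuous_intros)
  from continuous_on_compose2[OF assms(1) this] assms(2) show ?thesis by auto
qed

lemma continuous_on_phi_control:
  assumes "continuous_on (UNIV \<times> controls U) (\<lambda>(x, \<omega>). phi F k x \<omega>)"
  shows "continuous_on (controls U) (\<lambda>\<omega>. phi F k x \<omega>)"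
proof -
  have "continuous_on (controls U) (\<lambda>\<omega>. (x, \<omega>))" by (intro continuous_intros)
  from continuous_on_compose2[OF assms this] show ?thesis by auto
qed

lemma orbit_plus_trans:
  assumes "q \<in> orbit_plus F U p" "r \<in> orbit_plus F U q"
  shows "r \<in> orbit_plus F U p"
proof -
  obtain m \<omega> where q: "q = phi F m p \<omega>" "\<omega> \<in> controls U"
    using assms(1) unfolding orbit_plus_def by blast
  obtain k \<mu> where r: "r = phi F k q \<mu>" "\<mu> \<in> controls U"
    using assms(2) unfolding orbit_plus_def by blast
  have "r = phi F (m + k) p (switch_at m \<omega> \<mu>)" using q r phi_switch_at_add by metis
  then show ?thesis using q r switch_at_controls unfolding orbit_plus_def by blast
qed

lemma phi_in_orbit_plus_phi:
  assumes "\<omega> \<in> controls U" "i \<le> T"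
  shows "phi F T x \<omega> \<in> orbit_plus F U (phi F i x \<omega>)"
proof -
  have "phi F T x \<omega> = phi F (T - i) (phi F i x \<omega>) (\<lambda>j. \<omega> (i + j))"
    using phi_add[of F i "T - i" x \<omega>] assms(2) by simp
  then show ?thesis unfolding orbit_plus_def using shift_controls[OF assms(1)] by blast
qed

lemma closure_orbit_plus_mono:
  fixes F :: "'x::metric_space \<Rightarrow> 'u \<Rightarrow> 'x"
  assumes cont: "\<And>k \<omega>. \<omega> \<in> controls U \<Longrightarrow> continuous_on UNIV (\<lambda>x. phi F k x \<omega>)"
    and q: "q \<in> closure (orbit_plus F U p)"
  shows "closure (orbit_plus F U q) \<subseteq> closure (orbit_plus F U p)"
proof (rule closure_minimal[OF subsetI closed_closure])
  fix r assume "r \<in> orbit_plus F U q"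
  then obtain k \<mu> where r: "r = phi F k q \<mu>" and \<mu>: "\<mu> \<in> controls U"
    unfolding orbit_plus_def by blast
  obtain s where s: "\<And>n. s n \<in> orbit_plus F U p" "s \<longlonglongrightarrow> q"
    using q unfolding closure_sequential by blast
  have "(\<lambda>n. phi F k (s n) \<mu>) \<longlonglongrightarrow> r"
    unfolding r by (rule continuous_on_tendsto_compose[OF cont[OF \<mu>] s(2)]) auto
  moreover have "phi F k (s n) \<mu> \<in> orbit_plus F U p" for n
    using orbit_plus_trans[OF s(1)] \<mu> unfolding orbit_plus_def by blast
  ultimately show "r \<in> closure (orbit_plus F U p)"
    unfolding closure_sequential by (intro exI[of _ "\<lambda>n. phi F k (s n) \<mu>"]) blast
qed

section \<open>Orbit segments of control sets\<close>

lemma segment_then_invariant: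
  assumes \<nu>: "\<nu> \<in> controls U" and \<mu>: "\<mu> \<in> controls U" and i: "i \<le> T"
    and stay: "\<And>k. phi F k (phi F T x \<nu>) \<mu> \<in> Q"
  shows "\<exists>\<omega>\<in>controls U. \<forall>k. phi F k (phi F i x \<nu>) \<omega> \<in> Q \<union> {phi F j x \<nu> | j. j \<le> T}"
proof
  define \<omega> where "\<omega> = switch_at (T - i) (\<lambda>j. \<nu> (i + j)) \<mu>"
  show "\<omega> \<in> controls U" unfolding \<omega>_def using switch_at_controls shift_controls \<nu> \<mu> by blast
  show "\<forall>k. phi F k (phi F i x \<nu>) \<omega> \<in> Q \<union> {phi F j x \<nu> | j. j \<le> T}"
  proof
    fix k
    show "phi F k (phi F i x \<nu>) \<omega> \<in> Q \<union> {phi F j x \<nu> | j. j \<le> T}"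
    proof (cases "k \<le> T - i")
      case True
      then have "phi F k (phi F i x \<nu>) \<omega> = phi F (i + k) x \<nu>"
        unfolding \<omega>_def by (simp add: phi_switch_at_le phi_add)
      moreover have "i + k \<le> T" using True i by simp
      ultimately show ?thesis by blast
    next
      case False
      then obtain k' where k': "k = (T - i) + k'" by (metis le_add_diff_inverse nle_le)
      have "phi F k (phi F i x \<nu>) \<omega> = phi F k' (phi F T x \<nu>) \<mu>"
        using phi_add[of F i "T - i" x \<nu>] i unfolding k' \<omega>_def phi_switch_at_add by simp
      then show ?thesis using stay by simp
    qed
  qed
qed

lemma cs_props_add_segment:
  fixes F :: "'x::metric_space \<Rightarrow> 'u \<Rightarrow> 'x"
  assumes cont: "\<And>k \<omega>. \<omega> \<in> controls U \<Longrightarrow> continuous_on UNIV (\<lambda>x. phi F k x \<omega>)"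
    and Q: "cs_props F U Q" and x: "x \<in> Q" and \<nu>: "\<nu> \<in> controls U" and T: "phi F T x \<nu> \<in> Q"
  shows "cs_props F U (Q \<union> {phi F i x \<nu> | i. i \<le> T})"
proof -
  let ?S = "{phi F i x \<nu> | i. i \<le> T}"
  have Qi: "\<And>p. p \<in> Q \<Longrightarrow> \<exists>\<omega>\<in>controls U. \<forall>k. phi F k p \<omega> \<in> Q"
    using Q[unfolded cs_props_def, THEN conjunct1] by (rule bspec)
  have Qii: "\<And>p. p \<in> Q \<Longrightarrow> Q \<subseteq> closure (orbit_plus F U p)"
    using Q[unfolded cs_props_def, THEN conjunct2] by (rule bspec)
  have inv: "\<exists>\<omega>\<in>controls U. \<forall>k. phi F k p \<omega> \<in> Q \<union> ?S" if p: "p \<in> Q \<union> ?S" for p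
  proof (cases "p \<in> Q")
    case True
    then obtain \<omega> where "\<omega> \<in> controls U" "\<forall>k. phi F k p \<omega> \<in> Q" using Qi by blast
    then show ?thesis by (meson UnI1)
  next
    case False
    then obtain i where i: "i \<le> T" "p = phi F i x \<nu>" using p by auto
    obtain \<mu> where \<mu>: "\<mu> \<in> controls U" "\<And>k. phi F k (phi F T x \<nu>) \<mu> \<in> Q"
      using Qi[OF T] by auto
    show ?thesis unfolding i(2) by (rule segment_then_invariant[OF \<nu> \<mu>(1) i(1) \<mu>(2)])
  qed
  have Q_reach: "Q \<subseteq> closure (orbit_plus F U p)" if p: "p \<in> Q \<union> ?S" for p
  proof (cases "p \<in> Q")
    case True
    then show ?thesis by (rule Qii)
  next
    case False
    then obtain i where i: "i \<le> T" "p = phi F i x \<nu>" using p by auto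
    have "phi F T x \<nu> \<in> closure (orbit_plus F U p)"
      unfolding i(2) by (rule subsetD[OF closure_subset phi_in_orbit_plus_phi[OF \<nu> i(1)]])
    from closure_orbit_plus_mono[OF cont this] show ?thesis
      using Qii[OF T] by (rule order_trans[rotated])
  qed
  have S_reach: "?S \<subseteq> closure (orbit_plus F U p)" if "p \<in> Q \<union> ?S" for p
  proof -
    have "x \<in> closure (orbit_plus F U p)" using Q_reach[OF that] x by (rule subsetD)
    from closure_orbit_plus_mono[OF cont this]
    have "orbit_plus F U x \<subseteq> closure (orbit_plus F U p)"
      using closure_subset by (rule order_trans[rotated])
    moreover have "?S \<subseteq> orbit_plus F U x" using \<nu> unfolding orbit_plus_def by fastforce
    ultimately show ?thesis by (rule order_trans[rotated])
  qed
  show ?thesis unfolding cs_props_def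
  proof (intro conjI ballI)
    fix p assume "p \<in> Q \<union> ?S"
    then show "Q \<union> ?S \<subseteq> closure (orbit_plus F U p)" using Q_reach S_reach by (intro Un_least)
  qed (rule inv)
qed

text \<open>By maximality: adding the segment to \<open>Q\<close> preserves both defining properties.\<close>

lemma control_set_orbit_segment:
  fixes F :: "'x::metric_space \<Rightarrow> 'u \<Rightarrow> 'x"
  assumes "control_set F U Q"
    and "\<And>k \<omega>. \<omega> \<in> controls U \<Longrightarrow> continuous_on UNIV (\<lambda>x. phi F k x \<omega>)"
    and "x \<in> Q" "\<nu> \<in> controls U" "phi F T x \<nu> \<in> Q" "i \<le> T"
  shows "phi F i x \<nu> \<in> Q"
proof -
  have "cs_props F U (Q \<union> {phi F i x \<nu> | i. i \<le> T})"
    using assms(1) cs_props_add_segment[OF assms(2) _ assms(3-5)] unfolding control_set_def by blast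
  then have "Q \<union> {phi F i x \<nu> | i. i \<le> T} = Q"
    using assms(1) unfolding control_set_def by (meson Un_upper1)
  then show ?thesis using assms(6) by blast
qed

section \<open>Time averages along switched controls\<close>

lemma sum_le_mult_if_prefix_and_tail_le:
  fixes f :: "nat \<Rightarrow> real"
  assumes prefix: "\<And>i. i < T \<Longrightarrow> f i \<le> e"
    and tail: "\<And>m. m \<ge> 1 \<Longrightarrow> (\<Sum>k<m. f (T + k)) \<le> real m * e"
  shows "(\<Sum>i<n. f i) \<le> real n * e"
proof (cases "n \<le> T")
  case True
  then show ?thesis using sum_bounded_above[of "{..<n}" f e] prefix by simp
next
  case False
  define m where "m = n - T"
  have m: "n = T + m" "m \<ge> 1" using False unfolding m_def by simp_all
  have "(\<Sum>i<n. f i) = (\<Sum>i<T. f i) + (\<Sum>k<m. f (T + k))"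
    unfolding m(1) by (induction m) (simp_all add: add.assoc)
  also have "\<dots> \<le> real T * e + real m * e"
    using sum_bounded_above[of "{..<T}" f e] prefix tail[OF m(2)] by (intro add_mono) simp_all
  also have "\<dots> = real n * e" unfolding m(1) by (simp add: algebra_simps)
  finally show ?thesis .
qed

lemma avg_dist_switch_at_le:
  assumes prefix: "\<And>i. i < T \<Longrightarrow> infdist (phi F i y \<nu>) Q \<le> e"
    and tail: "\<And>m. m \<ge> 1 \<Longrightarrow> avg_dist F Q m (phi F T y \<nu>) \<mu> \<le> e"
    and n: "n \<ge> 1"
  shows "avg_dist F Q n y (switch_at T \<nu> \<mu>) \<le> e"
proof -
  have "(\<Sum>i<n. infdist (phi F i y (switch_at T \<nu> \<mu>)) Q) \<le> real n * e"
  proof (rule sum_le_mult_if_prefix_and_tail_le)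
    show "infdist (phi F i y (switch_at T \<nu> \<mu>)) Q \<le> e" if "i < T" for i
      using prefix[OF that] that by (simp add: phi_switch_at_le)
    show "(\<Sum>k<m. infdist (phi F (T + k) y (switch_at T \<nu> \<mu>)) Q) \<le> real m * e" if "m \<ge> 1" for m
      using tail[OF that] that by (simp add: phi_switch_at_add avg_dist_def pos_divide_le_eq mult.commute)
  qed
  then show ?thesis using n unfolding avg_dist_def by (simp add: pos_divide_le_eq mult.commute)
qed

lemma continuous_on_avg_dist:
  assumes "\<And>i. continuous_on S (\<lambda>s. phi F i (g s) (h s))"
  shows "continuous_on S (\<lambda>s. avg_dist F Q n (g s) (h s))"
  unfolding avg_dist_def divide_inverse using assms by (intro continuous_intros)

lemma closed_mean_served:
  fixes F :: "'x::metric_space \<Rightarrow> 'u \<Rightarrow> 'x"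
  assumes "closed Q" "\<And>k. continuous_on UNIV (\<lambda>x. phi F k x \<omega>)"
  shows "closed {y\<in>Q. \<forall>n\<ge>1. avg_dist F Q n y \<omega> \<le> e}"
proof -
  have "closed {y. avg_dist F Q n y \<omega> \<le> e}" for n
    using continuous_on_avg_dist[of UNIV F "\<lambda>y. y" "\<lambda>_. \<omega>" Q n] assms(2)
    by (intro closed_Collect_le) auto
  then have "closed (\<Inter>n\<in>{1..}. {y. avg_dist F Q n y \<omega> \<le> e})" by (intro closed_INT ballI)
  moreover have "{y\<in>Q. \<forall>n\<ge>1. avg_dist F Q n y \<omega> \<le> e} = Q \<inter> (\<Inter>n\<in>{1..}. {y. avg_dist F Q n y \<omega> \<le> e})"
    by auto
  ultimately show ?thesis using assms(1) by (simp add: closed_Int)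
qed

lemma finite_closed_cover_has_open_subset:
  assumes "finite I" "open W" "W \<noteq> {}" "W \<subseteq> (\<Union>i\<in>I. A i)" "\<And>i. i \<in> I \<Longrightarrow> closed (A i)"
  shows "\<exists>i\<in>I. \<exists>V. open V \<and> V \<noteq> {} \<and> V \<subseteq> A i"
  using assms
proof (induction I arbitrary: W rule: finite_induct)
  case empty
  then show ?case by simp
next
  case (insert a I)
  show ?case
  proof (cases "W \<subseteq> A a")
    case True
    then show ?thesis using insert.prems by blast
  next
    case False
    have "open (W - A a)" using insert.prems by (intro open_Diff) auto
    moreover have "W - A a \<noteq> {}" "W - A a \<subseteq> (\<Union>i\<in>I. A i)" using False insert.prems(3) by blast+
    ultimately obtain i V where "i \<in> I" "open V" "V \<noteq> {}" "V \<subseteq> A i"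
      using insert.IH insert.prems(4) by (metis insertCI)
    then show ?thesis by blast
  qed
qed

lemma phi_uniformly_close:
  fixes F :: "'x::metric_space \<Rightarrow> 'u \<Rightarrow> 'x"
  assumes "\<And>k. continuous_on UNIV (\<lambda>x. phi F k x \<nu>)" "\<eta> > 0"
  obtains d where "d > 0" "\<And>y i. dist y x < d \<Longrightarrow> i \<le> T \<Longrightarrow> dist (phi F i y \<nu>) (phi F i x \<nu>) < \<eta>"
proof -
  have "\<forall>\<^sub>F y in nhds x. dist (phi F i y \<nu>) (phi F i x \<nu>) < \<eta>" for i
  proof -
    have "isCont (\<lambda>y. phi F i y \<nu>) x"
      using assms(1) continuous_on_eq_continuous_at open_UNIV by blast
    then have "((\<lambda>y. phi F i y \<nu>) \<longlongrightarrow> phi F i x \<nu>) (nhds x)"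
      using tendsto_at_iff_tendsto_nhds[of "\<lambda>y. phi F i y \<nu>" x] by (simp add: isCont_def)
    then show ?thesis using assms(2) unfolding tendsto_iff by blast
  qed
  then have "\<forall>\<^sub>F y in nhds x. \<forall>i\<in>{..T}. dist (phi F i y \<nu>) (phi F i x \<nu>) < \<eta>"
    by (intro eventually_ball_finite) auto
  then show ?thesis using that unfolding eventually_nhds_metric by auto
qed

section \<open>Finite families of controls keeping \<open>Q\<close> invariant in the mean\<close>

definition mean_invariance_family ::
  "('x::metric_space \<Rightarrow> 'u \<Rightarrow> 'x) \<Rightarrow> 'u set \<Rightarrow> 'x set \<Rightarrow> real \<Rightarrow> (nat \<Rightarrow> 'u) set \<Rightarrow> bool" where
  "mean_invariance_family F U Q \<epsilon> Fs \<longleftrightarrow> finite Fs \<and> Fs \<subseteq> controls U \<and>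
     (\<forall>y\<in>Q. \<exists>\<omega>\<in>Fs. \<forall>n\<ge>1. avg_dist F Q n y \<omega> < \<epsilon>)"

lemma mean_invariance_familyD:
  assumes "mean_invariance_family F U Q \<epsilon> Fs"
  shows "finite Fs" "Fs \<subseteq> controls U" "\<And>y. y \<in> Q \<Longrightarrow> \<exists>\<omega>\<in>Fs. \<forall>n\<ge>1. avg_dist F Q n y \<omega> < \<epsilon>"
  using assms unfolding mean_invariance_family_def by auto

lemma hatQ_iff:
  assumes "n \<ge> 1"
  shows "x \<in> hatQ F Q n e \<omega> \<longleftrightarrow> x \<in> Q \<and> (\<forall>k\<in>{1..n}. avg_dist F Q k x \<omega> < e)"
  using assms by (simp add: hatQ_def)

lemma equi_inv_mean_imp_fin_equi_inv_mean:
  assumes "equi_inv_mean F U Q"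
  shows "fin_equi_inv_mean F U Q"
  unfolding fin_equi_inv_mean_def fin_equi_inv_mean_point_def
proof (intro ballI conjI allI impI)
  fix x \<epsilon> assume "x \<in> Q" "(\<epsilon>::real) > 0"
  then obtain \<delta> \<omega> where "\<delta> > 0" "\<omega> \<in> controls U"
    "\<forall>y\<in>ball x \<delta> \<inter> Q. \<forall>n\<ge>1. avg_dist F Q n y \<omega> < \<epsilon>"
    using assms unfolding equi_inv_mean_def equi_inv_mean_point_def by blast
  then show "\<exists>\<delta>>0. \<exists>Fs. finite Fs \<and> Fs \<subseteq> controls U \<and>
          (\<forall>y\<in>ball x \<delta> \<inter> Q. \<exists>\<omega>\<in>Fs. \<forall>n\<ge>1. avg_dist F Q n y \<omega> < \<epsilon>)"
    by (intro exI[of _ \<delta>] conjI exI[of _ "{\<omega>}"]) auto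
qed

lemma fin_equi_inv_mean_imp_family:
  assumes "compact Q" "fin_equi_inv_mean F U Q" "\<epsilon> > 0"
  obtains Fs where "mean_invariance_family F U Q \<epsilon> Fs"
proof -
  have "\<forall>x\<in>Q. \<exists>\<delta>. \<delta> > 0 \<and> (\<exists>G. finite G \<and> G \<subseteq> controls U \<and>
      (\<forall>y\<in>ball x \<delta> \<inter> Q. \<exists>\<omega>\<in>G. \<forall>n\<ge>1. avg_dist F Q n y \<omega> < \<epsilon>))"
    using assms(2,3) unfolding fin_equi_inv_mean_def fin_equi_inv_mean_point_def by blast
  then obtain d where "\<forall>x\<in>Q. d x > 0 \<and> (\<exists>G. finite G \<and> G \<subseteq> controls U \<and>
      (\<forall>y\<in>ball x (d x) \<inter> Q. \<exists>\<omega>\<in>G. \<forall>n\<ge>1. avg_dist F Q n y \<omega> < \<epsilon>))"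
    by (elim bchoice[THEN exE])
  then obtain G where "\<forall>x\<in>Q. d x > 0 \<and> finite (G x) \<and> G x \<subseteq> controls U \<and>
      (\<forall>y\<in>ball x (d x) \<inter> Q. \<exists>\<omega>\<in>G x. \<forall>n\<ge>1. avg_dist F Q n y \<omega> < \<epsilon>)"
    by (metis (no_types, lifting) bchoice)
  then have d: "\<And>x. x \<in> Q \<Longrightarrow> d x > 0"
    and G: "\<And>x. x \<in> Q \<Longrightarrow> finite (G x) \<and> G x \<subseteq> controls U"
    and served: "\<And>x y. x \<in> Q \<Longrightarrow> y \<in> ball x (d x) \<inter> Q \<Longrightarrow>
      \<exists>\<omega>\<in>G x. \<forall>n\<ge>1. avg_dist F Q n y \<omega> < \<epsilon>"
    by auto
  have cover: "Q \<subseteq> (\<Union>x\<in>Q. ball x (d x))" using d by force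
  obtain Q' where Q': "Q' \<subseteq> Q" "finite Q'" "Q \<subseteq> (\<Union>x\<in>Q'. ball x (d x))"
    by (rule compactE_image[OF assms(1) open_ball cover])
  have "mean_invariance_family F U Q \<epsilon> (\<Union>x\<in>Q'. G x)"
    unfolding mean_invariance_family_def
  proof (intro conjI ballI)
    show "finite (\<Union>x\<in>Q'. G x)" "(\<Union>x\<in>Q'. G x) \<subseteq> controls U" using Q'(1,2) G by auto
    fix y assume "y \<in> Q"
    then obtain x where x: "x \<in> Q'" "y \<in> ball x (d x) \<inter> Q" using Q'(3) by blast
    then obtain \<omega> where "\<omega> \<in> G x" "\<forall>n\<ge>1. avg_dist F Q n y \<omega> < \<epsilon>"
      using served Q'(1) by blast
    then show "\<exists>\<omega>\<in>\<Union>x\<in>Q'. G x. \<forall>n\<ge>1. avg_dist F Q n y \<omega> < \<epsilon>" using x(1) by blast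
  qed
  then show ?thesis by (rule that)
qed

lemma family_imp_fin_equi_inv_mean:
  assumes "\<And>\<epsilon>. \<epsilon> > 0 \<Longrightarrow> \<exists>Fs. mean_invariance_family F U Q \<epsilon> Fs"
  shows "fin_equi_inv_mean F U Q"
  unfolding fin_equi_inv_mean_def fin_equi_inv_mean_point_def
proof (intro ballI conjI allI impI)
  fix x \<epsilon> assume "(\<epsilon>::real) > 0"
  then obtain Fs where Fs: "mean_invariance_family F U Q \<epsilon> Fs" using assms by blast
  show "\<exists>\<delta>>0. \<exists>Fs. finite Fs \<and> Fs \<subseteq> controls U \<and>
          (\<forall>y\<in>ball x \<delta> \<inter> Q. \<exists>\<omega>\<in>Fs. \<forall>n\<ge>1. avg_dist F Q n y \<omega> < \<epsilon>)"
    using mean_invariance_familyD[OF Fs] by (intro exI[of _ "1::real"] exI[of _ Fs] conjI) auto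
qed

lemma family_imp_bounded_inv_complexity_mean:
  assumes "\<And>\<epsilon>. \<epsilon> > 0 \<Longrightarrow> \<exists>Fs. mean_invariance_family F U Q \<epsilon> Fs"
  shows "bounded_inv_complexity_mean F U Q"
  unfolding bounded_inv_complexity_mean_def
proof (intro allI impI)
  fix \<epsilon> :: real assume "\<epsilon> > 0"
  then obtain Fs where "mean_invariance_family F U Q \<epsilon> Fs" using assms by blast
  note Fs = mean_invariance_familyD[OF this]
  have "r_inv_mean F U n \<epsilon> Q \<le> enat (card Fs)" if n: "n \<ge> 1" for n
  proof -
    have cover: "Q = (\<Union>\<omega>\<in>Fs. hatQ F Q n \<epsilon> \<omega>)"
    proof (intro equalityI subsetI)
      fix y assume y: "y \<in> Q"
      then obtain \<omega> where \<omega>: "\<omega> \<in> Fs" "\<forall>k\<ge>1. avg_dist F Q k y \<omega> < \<epsilon>" using Fs(3) by blast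
      show "y \<in> (\<Union>\<omega>\<in>Fs. hatQ F Q n \<epsilon> \<omega>)"
        using y \<omega>(2) by (intro UN_I[OF \<omega>(1)]) (simp add: hatQ_iff[OF n])
    qed (auto simp: hatQ_def)
    have "spanning_mean F U n \<epsilon> Q Fs" unfolding spanning_mean_def using Fs(2) cover by (rule conjI)
    then have "r_inv_mean F U n \<epsilon> Q \<le> (if finite Fs then enat (card Fs) else \<infinity>)"
      unfolding r_inv_mean_def by (intro INF_lower) simp
    then show ?thesis using Fs(1) by simp
  qed
  then show "\<exists>C::nat. \<forall>n\<ge>1. r_inv_mean F U n \<epsilon> Q \<le> enat C" by blast
qed

lemma r_inv_mean_le_imp_spanning:
  assumes "r_inv_mean F U n e Q \<le> enat C"
  obtains Fs where "spanning_mean F U n e Q Fs" "finite Fs" "card Fs \<le> C"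
proof -
  let ?card = "\<lambda>Fs. if finite Fs then enat (card Fs) else \<infinity>"
  let ?A = "?card ` {Fs. spanning_mean F U n e Q Fs}"
  have "?A \<noteq> {}" using assms unfolding r_inv_mean_def by (auto simp: top_enat_def)
  then have "Inf ?A \<in> ?A" by (meson ex_in_conv wellorder_InfI)
  then obtain Fs where "spanning_mean F U n e Q Fs" "?card Fs \<le> enat C"
    using assms unfolding r_inv_mean_def by auto
  then show ?thesis using that by (cases "finite Fs") auto
qed

lemma finite_set_enumeration:
  assumes "finite A" "A \<noteq> {}" "card A \<le> C"
  obtains t :: "nat \<Rightarrow> 'a" where "range t \<subseteq> A" "A \<subseteq> t ` {..<C}"
proof -
  obtain h where h: "bij_betw h {0..<card A} A" using ex_bij_betw_nat_finite[OF assms(1)] by blast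
  have pos: "card A > 0" using assms(1,2) by (simp add: card_gt_0_iff)
  define t where "t j = h (if j < card A then j else 0)" for j
  have "range t \<subseteq> A" using h pos unfolding t_def bij_betw_def by auto
  moreover have "A \<subseteq> t ` {..<C}"
  proof
    fix a assume "a \<in> A"
    then obtain i where "i < card A" "a = h i"
      using h unfolding bij_betw_def by (metis atLeastLessThan_iff imageE)
    then show "a \<in> t ` {..<C}" using assms(3) unfolding t_def by force
  qed
  ultimately show ?thesis by (rule that)
qed

lemma compact_PiE_UNIV:
  fixes S :: "'b::topological_space set"
  assumes "compact S"
  shows "compact (PiE (UNIV::'a set) (\<lambda>_. S))"
proof -
  have "compactin (product_topology (\<lambda>_. euclidean) (UNIV::'a set)) (PiE UNIV (\<lambda>_. S))"
    using assms by (simp add: compactin_PiE)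
  then show ?thesis by (simp add: euclidean_product_topology)
qed

lemma compact_controls: "compact U \<Longrightarrow> compact (controls U)"
  unfolding controls_def using compact_PiE_UNIV[of U] by (simp add: PiE_def extensional_def Pi_def)

lemma compact_Int_decseq_nonempty:
  assumes "compact S" "\<And>n. closed (K n)" "\<And>n. S \<inter> K n \<noteq> {}" "decseq K"
  shows "S \<inter> (\<Inter>n. K n) \<noteq> {}"
proof (rule compact_imp_fip_image[OF assms(1) assms(2)])
  fix I :: "nat set" assume "finite I"
  then have "i \<le> Max (insert 0 I)" if "i \<in> I" for i
    using that by simp
  then have "K (Max (insert 0 I)) \<subseteq> (\<Inter>i\<in>I. K i)"
    using decseqD[OF assms(4)] by blast
  then show "S \<inter> (\<Inter>i\<in>I. K i) \<noteq> {}" using assms(3) by blast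
qed

lemma index_for_all_horizons:
  fixes P :: "nat \<Rightarrow> nat \<Rightarrow> bool"
  assumes "\<And>n. \<exists>j<C. P j n" and "\<And>j m n. P j m \<Longrightarrow> n \<le> m \<Longrightarrow> P j n"
  shows "\<exists>j<C. \<forall>n. P j n"
proof (rule ccontr)
  assume "\<not> ?thesis"
  then obtain N where N: "\<And>j. j < C \<Longrightarrow> \<not> P j (N j)" by metis
  obtain j where j: "j < C" "P j (Max (N ` {..<C}))" using assms(1) by blast
  have "N j \<le> Max (N ` {..<C})" using j(1) by simp
  then show False using N[OF j(1)] assms(2)[OF j(2)] by blast
qed

lemma continuous_on_avg_dist_component:
  assumes "\<And>k. continuous_on (UNIV \<times> controls U) (\<lambda>(x, \<omega>). phi F k x \<omega>)"
  shows "continuous_on (PiE UNIV (\<lambda>_. controls U)) (\<lambda>t. avg_dist F Q k x (t j))"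
proof (rule continuous_on_avg_dist)
  fix i
  have "continuous_on (PiE UNIV (\<lambda>_. controls U)) (\<lambda>t. t j)"
    by (rule continuous_on_subset[OF continuous_on_product_coordinates subset_UNIV])
  moreover have "(\<lambda>t. t j) ` PiE UNIV (\<lambda>_. controls U) \<subseteq> controls U" by auto
  ultimately show "continuous_on (PiE UNIV (\<lambda>_. controls U)) (\<lambda>t. phi F i x (t j))"
    using continuous_on_compose2[OF continuous_on_phi_control[OF assms]] by blast
qed

lemma bounded_inv_complexity_mean_imp_family:
  fixes F :: "'x::metric_space \<Rightarrow> 'u::metric_space \<Rightarrow> 'x"
  assumes "compact U" and cont: "\<And>k. continuous_on (UNIV \<times> controls U) (\<lambda>(x, \<omega>). phi F k x \<omega>)"
    and "Q \<noteq> {}" "bounded_inv_complexity_mean F U Q" "\<epsilon> > 0"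
  obtains Fs where "mean_invariance_family F U Q \<epsilon> Fs"
proof -
  define e where "e = \<epsilon> / 2"
  have "e > 0" unfolding e_def using assms(5) by simp
  then obtain C :: nat where C: "\<And>n. n \<ge> 1 \<Longrightarrow> r_inv_mean F U n e Q \<le> enat C"
    using assms(4) unfolding bounded_inv_complexity_mean_def by blast
  \<comment> \<open>A \<open>C\<close>-tuple of controls is a function \<open>nat \<Rightarrow> nat \<Rightarrow> 'u\<close>; only the entries below \<open>C\<close> matter.\<close>
  define S where "S = (PiE UNIV (\<lambda>_. controls U) :: (nat \<Rightarrow> nat \<Rightarrow> 'u) set)"
  define K where "K n = {t\<in>S. \<forall>x\<in>Q. \<exists>j<C. \<forall>k\<in>{1..Suc n}. avg_dist F Q k x (t j) \<le> e}" for n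
  have "compact S"
    unfolding S_def by (rule compact_PiE_UNIV[OF compact_controls[OF assms(1)]])
  moreover have "closed (K n)" for n
  proof -
    have K_eq: "K n = S \<inter> (\<Inter>x\<in>Q. \<Union>j<C. \<Inter>k\<in>{1..Suc n}. S \<inter> (\<lambda>t. avg_dist F Q k x (t j)) -` {..e})"
      unfolding K_def by blast
    have closed_S: "closed S" using \<open>compact S\<close> by (rule compact_imp_closed)
    have closed_pre: "closed (S \<inter> (\<lambda>t. avg_dist F Q k x (t j)) -` {..e})" for k x j
      unfolding S_def using closed_S[unfolded S_def]
      by (rule continuous_closed_preimage[OF continuous_on_avg_dist_component[OF cont] _ closed_atMost])
    show ?thesis
      unfolding K_eq by (intro closed_pre closed_Int[OF closed_S] closed_INT ballI closed_UN finite_lessThan)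
  qed
  moreover have "S \<inter> K n \<noteq> {}" for n
  proof -
    have "r_inv_mean F U (Suc n) e Q \<le> enat C" by (rule C) simp
    then obtain Fs where Fs: "spanning_mean F U (Suc n) e Q Fs" "finite Fs" "card Fs \<le> C"
      by (rule r_inv_mean_le_imp_spanning)
    then have "Fs \<noteq> {}" using assms(3) unfolding spanning_mean_def by auto
    then obtain t where t: "range t \<subseteq> Fs" "Fs \<subseteq> t ` {..<C}"
      using finite_set_enumeration[OF Fs(2) _ Fs(3)] by blast
    have "t \<in> S" using t(1) Fs(1) unfolding S_def spanning_mean_def by auto
    moreover have "\<exists>j<C. \<forall>k\<in>{1..Suc n}. avg_dist F Q k x (t j) \<le> e" if "x \<in> Q" for x
      using that Fs(1) t(2) unfolding spanning_mean_def
      by (fastforce simp: hatQ_iff[of "Suc n"] intro: less_imp_le)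
    ultimately show ?thesis unfolding K_def by blast
  qed
  moreover have "decseq K" unfolding K_def decseq_def by fastforce
  ultimately have "S \<inter> (\<Inter>n. K n) \<noteq> {}" by (rule compact_Int_decseq_nonempty)
  then obtain t where t: "t \<in> S" "\<And>n. t \<in> K n" by blast
  have "mean_invariance_family F U Q \<epsilon> (t ` {..<C})"
    unfolding mean_invariance_family_def
  proof (intro conjI ballI)
    show "t ` {..<C} \<subseteq> controls U" using t(1) unfolding S_def by auto
    fix y assume "y \<in> Q"
    have "\<exists>j<C. \<forall>n. \<forall>k\<in>{1..Suc n}. avg_dist F Q k y (t j) \<le> e"
    proof (rule index_for_all_horizons)
      show "\<exists>j<C. \<forall>k\<in>{1..Suc n}. avg_dist F Q k y (t j) \<le> e" for n
        using t(2)[of n] \<open>y \<in> Q\<close> unfolding K_def by blast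
    qed auto
    then obtain j where j: "j < C" "\<And>n k. k \<in> {1..Suc n} \<Longrightarrow> avg_dist F Q k y (t j) \<le> e"
      by blast
    have "avg_dist F Q k y (t j) < \<epsilon>" if "k \<ge> 1" for k
      using j(2)[of k k] that assms(5) unfolding e_def by simp
    then show "\<exists>\<omega>\<in>t ` {..<C}. \<forall>n\<ge>1. avg_dist F Q n y \<omega> < \<epsilon>" using j(1) by blast
  qed simp
  then show ?thesis by (rule that)
qed

lemma family_imp_served_ball:
  fixes F :: "'x::metric_space \<Rightarrow> 'u \<Rightarrow> 'x"
  assumes "closed Q" and cont: "\<And>k \<omega>. \<omega> \<in> controls U \<Longrightarrow> continuous_on UNIV (\<lambda>x. phi F k x \<omega>)"
    and "interior Q \<noteq> {}" "mean_invariance_family F U Q e Fs"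
  shows "\<exists>\<omega>\<in>controls U. \<exists>z r. r > 0 \<and> ball z r \<subseteq> {y\<in>Q. \<forall>n\<ge>1. avg_dist F Q n y \<omega> \<le> e}"
proof -
  let ?A = "\<lambda>\<omega>. {y\<in>Q. \<forall>n\<ge>1. avg_dist F Q n y \<omega> \<le> e}"
  note Fs = mean_invariance_familyD[OF assms(4)]
  have "interior Q \<subseteq> (\<Union>\<omega>\<in>Fs. ?A \<omega>)"
    using Fs(3) interior_subset by (fastforce intro: less_imp_le)
  moreover have "closed (?A \<omega>)" if "\<omega> \<in> Fs" for \<omega>
    using closed_mean_served[OF assms(1) cont] that Fs(2) by blast
  ultimately have "\<exists>\<omega>\<in>Fs. \<exists>V. open V \<and> V \<noteq> {} \<and> V \<subseteq> ?A \<omega>"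
    by (rule finite_closed_cover_has_open_subset[OF Fs(1) open_interior assms(3)])
  then obtain \<omega> V where \<omega>: "\<omega> \<in> Fs" and V: "open V" "V \<noteq> {}" "V \<subseteq> ?A \<omega>" by blast
  obtain z where "z \<in> V" using V(2) by blast
  then obtain r where r: "r > 0" "ball z r \<subseteq> V" using V(1) open_contains_ball by blast
  have "ball z r \<subseteq> ?A \<omega>" using r(2) V(3) by (rule order_trans)
  then show ?thesis using \<omega> Fs(2) r(1) by blast
qed

lemma equi_inv_mean_point_if_served_ball:
  fixes F :: "'x::metric_space \<Rightarrow> 'u \<Rightarrow> 'x"
  assumes cs: "control_set F U Q"
    and cont: "\<And>k \<omega>. \<omega> \<in> controls U \<Longrightarrow> continuous_on UNIV (\<lambda>x. phi F k x \<omega>)"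
    and x: "x \<in> Q" and e: "e > 0" and \<mu>: "\<mu> \<in> controls U" and r: "r > 0"
    and ball: "ball z r \<subseteq> {y\<in>Q. \<forall>n\<ge>1. avg_dist F Q n y \<mu> \<le> e}"
  shows "\<exists>\<delta>>0. \<exists>\<omega>\<in>controls U. \<forall>y\<in>ball x \<delta> \<inter> Q. \<forall>n\<ge>1. avg_dist F Q n y \<omega> \<le> e"
proof -
  have "z \<in> Q" using ball centre_in_ball[of z r] r by blast
  moreover have "Q \<subseteq> closure (orbit_plus F U x)"
    using cs x unfolding control_set_def cs_props_def by blast
  ultimately have "z \<in> closure (orbit_plus F U x)" by blast
  then obtain p where "p \<in> orbit_plus F U x" "dist p z < r / 2"
    using r unfolding closure_approachable by (meson half_gt_zero)
  then obtain T \<nu> where \<nu>: "\<nu> \<in> controls U" and Tz: "dist (phi F T x \<nu>) z < r / 2"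
    unfolding orbit_plus_def by blast
  have "phi F T x \<nu> \<in> ball z r" using Tz r by (simp add: dist_commute)
  then have "phi F T x \<nu> \<in> Q" using ball by blast
  then have seg: "\<And>i. i \<le> T \<Longrightarrow> phi F i x \<nu> \<in> Q"
    using control_set_orbit_segment[OF cs cont x \<nu>] by blast
  obtain d where d: "d > 0"
    "\<And>y i. dist y x < d \<Longrightarrow> i \<le> T \<Longrightarrow> dist (phi F i y \<nu>) (phi F i x \<nu>) < min e (r / 2)"
    using phi_uniformly_close[OF cont[OF \<nu>], of "min e (r / 2)"] e r by auto
  have "avg_dist F Q n y (switch_at T \<nu> \<mu>) \<le> e" if y: "y \<in> ball x d \<inter> Q" and n: "n \<ge> 1" for y n
  proof (rule avg_dist_switch_at_le[OF _ _ n])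
    have "dist y x < d" using y by (simp add: dist_commute)
    then have close: "dist (phi F i y \<nu>) (phi F i x \<nu>) < min e (r / 2)" if "i \<le> T" for i
      using d(2) that by blast
    show "infdist (phi F i y \<nu>) Q \<le> e" if "i < T" for i
      using infdist_le[OF seg, of i "phi F i y \<nu>"] close[of i] that by linarith
    have "dist (phi F T y \<nu>) z < r"
      using dist_triangle[of "phi F T y \<nu>" z "phi F T x \<nu>"] close[of T] Tz by linarith
    then have "phi F T y \<nu> \<in> ball z r" by (simp add: dist_commute)
    then show "avg_dist F Q m (phi F T y \<nu>) \<mu> \<le> e" if "m \<ge> 1" for m
      using ball that by blast
  qed
  then show ?thesis using d(1) switch_at_controls[OF \<nu> \<mu>] by blast
qed

lemma family_imp_equi_inv_mean:
  fixes F :: "'x::metric_space \<Rightarrow> 'u \<Rightarrow> 'x"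
  assumes "control_set F U Q" "closed Q"
    and cont: "\<And>k \<omega>. \<omega> \<in> controls U \<Longrightarrow> continuous_on UNIV (\<lambda>x. phi F k x \<omega>)"
    and "interior Q \<noteq> {}" and family: "\<And>\<epsilon>. \<epsilon> > 0 \<Longrightarrow> \<exists>Fs. mean_invariance_family F U Q \<epsilon> Fs"
  shows "equi_inv_mean F U Q"
  unfolding equi_inv_mean_def equi_inv_mean_point_def
proof (intro ballI conjI allI impI)
  fix x \<epsilon> assume x: "x \<in> Q" and "(\<epsilon>::real) > 0"
  then have e: "\<epsilon> / 2 > 0" "\<epsilon> / 2 < \<epsilon>" by simp_all
  obtain Fs where "mean_invariance_family F U Q (\<epsilon> / 2) Fs" using family[OF e(1)] by blast
  then obtain \<mu> z r where "\<mu> \<in> controls U" "r > 0"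
    "ball z r \<subseteq> {y\<in>Q. \<forall>n\<ge>1. avg_dist F Q n y \<mu> \<le> \<epsilon> / 2}"
    using family_imp_served_ball[OF assms(2) cont assms(4)] by blast
  then have "\<exists>\<delta>>0. \<exists>\<omega>\<in>controls U. \<forall>y\<in>ball x \<delta> \<inter> Q. \<forall>n\<ge>1. avg_dist F Q n y \<omega> \<le> \<epsilon> / 2"
    using equi_inv_mean_point_if_served_ball[OF assms(1) cont x e(1)] by blast
  then show "\<exists>\<delta>>0. \<exists>\<omega>\<in>controls U. \<forall>y\<in>ball x \<delta> \<inter> Q. \<forall>n\<ge>1. avg_dist F Q n y \<omega> < \<epsilon>"
    using e(2) by (meson order_le_less_trans)
qed

theorem mainTheorem6:
  fixes F :: "'x::metric_space \<Rightarrow> 'u::metric_space \<Rightarrow> 'x"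
    and U :: "'u set" and Q :: "'x set"
  assumes "compact U"
    and "\<forall>u\<in>U. continuous_on UNIV (\<lambda>x. F x u)"
    and "\<forall>k. continuous_on (UNIV \<times> controls U) (\<lambda>(x, \<omega>). phi F k x \<omega>)"
    and "compact Q" and "control_set F U Q" and "interior Q \<noteq> {}"
  shows "(equi_inv_mean F U Q \<longleftrightarrow> fin_equi_inv_mean F U Q) \<and>
         (fin_equi_inv_mean F U Q \<longleftrightarrow> bounded_inv_complexity_mean F U Q)"
proof -
  have cont: "\<And>k \<omega>. \<omega> \<in> controls U \<Longrightarrow> continuous_on UNIV (\<lambda>x. phi F k x \<omega>)"
    using assms(3) continuous_on_phi_state by blast
  have "Q \<noteq> {}" using assms(6) interior_subset by blast
  have closed_Q: "closed Q" using assms(4) by (rule compact_imp_closed)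
  have fin_family: "\<exists>Fs. mean_invariance_family F U Q \<epsilon> Fs"
    if "fin_equi_inv_mean F U Q" "\<epsilon> > 0" for \<epsilon>
    using fin_equi_inv_mean_imp_family[OF assms(4) that] by blast
  have bounded_family: "\<exists>Fs. mean_invariance_family F U Q \<epsilon> Fs"
    if "bounded_inv_complexity_mean F U Q" "\<epsilon> > 0" for \<epsilon>
    using bounded_inv_complexity_mean_imp_family[OF assms(1) _ \<open>Q \<noteq> {}\<close> that] assms(3) by blast
  have "fin_equi_inv_mean F U Q \<Longrightarrow> equi_inv_mean F U Q"
    using family_imp_equi_inv_mean[OF assms(5) closed_Q cont assms(6)] fin_family by blast
  moreover have "fin_equi_inv_mean F U Q \<Longrightarrow> bounded_inv_complexity_mean F U Q"
    using family_imp_bounded_inv_complexity_mean fin_family by blast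
  moreover have "bounded_inv_complexity_mean F U Q \<Longrightarrow> fin_equi_inv_mean F U Q"
    using family_imp_fin_equi_inv_mean bounded_family by blast
  ultimately show ?thesis using equi_inv_mean_imp_fin_equi_inv_mean by blast
qed

end
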